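(* Let $C=\operatorname{conv}(\gamma_1\cup\gamma_2\cup\gamma_3\cup\gamma_4)\subset\mathbb{R}^3$, where for $t\in[0,\pi/4]$ \[ \gamma_1(t)=(0,-\sin t,\cos t-1),\ \gamma_2(t)=(0,\cos t-1,-\sin t),\ \gamma_3(t)=(-\sin t,1-\cos t,0),\ \gamma_4(t)=(\cos t-1,\sin t,0) \] (here $\gamma_i$ also denotes the image curve). Then $F=\operatorname{conv}(\gamma_3\cup\gamma_4)$ is a face of $C$ containing $0$, and $\mathcal{T}(0;C)\cap\operatorname{span}F\neq\mathcal{T}(0;F)$; specifically $g=(0,-1,0)\in\mathcal{T}(0;C)\cap\operatorname{span}F$ but $g\notin\mathcal{T}(0;F)$. Consequently the closed convex cone $K=\operatorname{cone}(C\times\{1\})\subset\mathbb{R}^4$ is not tangentially exposed (and hence, by Theorem 3.1, not facially dual complete).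
   Context: Tangent cone: $\mathcal{T}(x;D)=\operatorname{cl}\{d: x+\epsilon d\in D\text{ for some }\epsilon>0\}$. A face of a closed convex set $D$ is a closed convex $F\subseteq D$ such that $x\in F$, $y,z\in D$, $x\in(y,z)$ imply $y,z\in F$. A closed convex cone $K$ is tangentially exposed if $\mathcal{T}(x;K)\cap\operatorname{span}F=\mathcal{T}(x;F)$ for every face $F\neq K$ and every $x\in F$. $\operatorname{cone}(S)=\{\lambda s:\lambda\ge0, s\in \operatorname{conv} S\}$. Theorem 3.1 states: every facially dual complete closed convex cone (one with $K^*+F^\perp$ closed for all nonempty faces $F\ne K$) is tangentially exposed. *)

theory Defs
  imports "HOL-Analysis.Analysis"
begin

definition tangent_cone :: "'a::real_normed_vector \<Rightarrow> 'a set \<Rightarrow> 'a set" where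
  "tangent_cone x D = closure {d. \<exists>e>0. x + e *\<^sub>R d \<in> D}"

definition is_face :: "'a::real_normed_vector set \<Rightarrow> 'a set \<Rightarrow> bool" where
  "is_face F D \<longleftrightarrow> closed F \<and> convex F \<and> F \<subseteq> D \<and>
     (\<forall>x\<in>F. \<forall>y\<in>D. \<forall>z\<in>D. x \<in> open_segment y z \<longrightarrow> y \<in> F \<and> z \<in> F)"

definition tangentially_exposed :: "'a::real_normed_vector set \<Rightarrow> bool" where
  "tangentially_exposed K \<longleftrightarrow>
     (\<forall>F. is_face F K \<and> F \<noteq> K \<longrightarrow>
        (\<forall>x\<in>F. tangent_cone x K \<inter> span F = tangent_cone x F))"

definition cone_gen :: "'a::real_vector set \<Rightarrow> 'a set" where
  "cone_gen S = {c *\<^sub>R s | c s. c \<ge> 0 \<and> s \<in> convex hull S}"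

definition gamma1 :: "real \<Rightarrow> real^3" where
  "gamma1 t = vector [0, - sin t, cos t - 1]"
definition gamma2 :: "real \<Rightarrow> real^3" where
  "gamma2 t = vector [0, cos t - 1, - sin t]"
definition gamma3 :: "real \<Rightarrow> real^3" where
  "gamma3 t = vector [- sin t, 1 - cos t, 0]"
definition gamma4 :: "real \<Rightarrow> real^3" where
  "gamma4 t = vector [cos t - 1, sin t, 0]"

definition exC :: "(real^3) set" where
  "exC = convex hull (gamma1 ` {0..pi/4} \<union> gamma2 ` {0..pi/4} \<union>
                      gamma3 ` {0..pi/4} \<union> gamma4 ` {0..pi/4})"

definition exF :: "(real^3) set" where
  "exF = convex hull (gamma3 ` {0..pi/4} \<union> gamma4 ` {0..pi/4})"

end

theory Submission
  imports Defs
begin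

text \<open>The set \<open>C\<close> lies in the half-space \<open>x\<^sub>3 \<le> 0\<close> and meets the plane \<open>x\<^sub>3 = 0\<close> exactly in
  \<open>F\<close>, so \<open>F\<close> is an exposed face of \<open>C\<close>. The arc \<open>\<gamma>\<^sub>1\<close> leaves \<open>0\<close> in the direction
  \<open>g = (0, -1, 0)\<close>, so \<open>g\<close> is tangent to \<open>C\<close>; \<open>g\<close> lies in the plane spanned by \<open>F\<close>, but \<open>F\<close>
  stays in the half-plane \<open>x\<^sub>2 \<ge> 0\<close>, so \<open>g\<close> is not tangent to \<open>F\<close>. Lifting \<open>C\<close> to height one,
  the cone over \<open>F \<times> {1}\<close> is an exposed face of \<open>K\<close>, and at \<open>(0, 1)\<close> the direction \<open>(g, 0)\<close>
  has the same tangency and span properties with respect to \<open>K\<close> and this face as \<open>g\<close> has with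
  respect to \<open>C\<close> and \<open>F\<close> at \<open>0\<close>.\<close>

section \<open>Faces and tangent cones\<close>

lemma is_face_iff_face_of:
  fixes D :: "'a::euclidean_space set"
  assumes "closed D" "convex D"
  shows "is_face F D \<longleftrightarrow> F face_of D"
proof
  show "F face_of D" if "is_face F D"
    using that unfolding is_face_def face_of_def by blast
  show "is_face F D" if "F face_of D"
    using that face_of_imp_closed[OF assms(2,1)] unfolding is_face_def face_of_def by blast
qed

lemma is_face_Int_supporting_hyperplane_le:
  fixes D :: "'a::euclidean_space set"
  assumes "closed D" "convex D" "D \<subseteq> {x. a \<bullet> x \<le> b}"
  shows "is_face (D \<inter> {x. a \<bullet> x = b}) D"
  unfolding is_face_iff_face_of[OF assms(1,2)]
  using assms(2,3) by (intro face_of_Int_supporting_hyperplane_le) auto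

lemma face_of_convex_hull_eq_convex_hull_Int:
  fixes S :: "'a::euclidean_space set"
  assumes "compact S" "T face_of convex hull S"
  shows "T = convex hull (S \<inter> T)"
proof (rule antisym)
  obtain S' where "S' \<subseteq> S" and T: "T = convex hull S'"
    using face_of_convex_hull_subset[OF assms] .
  then have "S' \<subseteq> S \<inter> T"
    using hull_subset[of S' convex] by auto
  then show "T \<subseteq> convex hull (S \<inter> T)"
    unfolding T by (rule hull_mono)
  show "convex hull (S \<inter> T) \<subseteq> T"
    by (metis T convex_convex_hull hull_minimal inf.cobounded2)
qed

definition feasible_directions :: "'a::real_normed_vector \<Rightarrow> 'a set \<Rightarrow> 'a set" where
  "feasible_directions x D = {d. \<exists>e>0. x + e *\<^sub>R d \<in> D}"

lemma tangent_cone_eq_closure: "tangent_cone x D = closure (feasible_directions x D)"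
  unfolding tangent_cone_def feasible_directions_def ..

lemma feasible_directions_subset_tangent_cone: "feasible_directions x D \<subseteq> tangent_cone x D"
  unfolding tangent_cone_eq_closure by (rule closure_subset)

lemma tangent_cone_image_subset:
  assumes "continuous_on UNIV f"
    and "f ` feasible_directions x D \<subseteq> feasible_directions y E"
  shows "f ` tangent_cone x D \<subseteq> tangent_cone y E"
  unfolding tangent_cone_eq_closure
  using assms closure_subset
  by (intro image_closure_subset) (auto intro: continuous_on_subset)

lemma tangent_cone_subset_halfspace:
  fixes a :: "'a::real_inner"
  assumes "\<And>y. y \<in> D \<Longrightarrow> a \<bullet> y \<le> a \<bullet> x"
  shows "tangent_cone x D \<subseteq> {d. a \<bullet> d \<le> 0}"
  unfolding tangent_cone_eq_closure
proof (rule closure_minimal)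
  show "feasible_directions x D \<subseteq> {d. a \<bullet> d \<le> 0}"
  proof
    fix d assume "d \<in> feasible_directions x D"
    then obtain e where "e > 0" "x + e *\<^sub>R d \<in> D"
      by (auto simp: feasible_directions_def)
    then have "e * (a \<bullet> d) \<le> 0"
      using assms[of "x + e *\<^sub>R d"] by (simp add: inner_add_right)
    with \<open>e > 0\<close> show "d \<in> {d. a \<bullet> d \<le> 0}"
      by (simp add: mult_le_0_iff)
  qed
qed (rule closed_halfspace_le)

section \<open>Cones over a set lifted to height one\<close>

lemma cone_gen_eq_conic_hull: "convex S \<Longrightarrow> cone_gen S = conic hull S"
  unfolding cone_gen_def conic_hull_explicit by (simp add: hull_same)

lemma mem_conic_hull_lift:
  "p \<in> conic hull (S \<times> {1::real}) \<longleftrightarrow> (\<exists>c x. 0 \<le> c \<and> x \<in> S \<and> p = (c *\<^sub>R x, c))"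
  by (auto simp: conic_hull_explicit)

lemma Pair_one_mem_conic_hull_lift: "(x, 1) \<in> conic hull (S \<times> {1::real}) \<longleftrightarrow> x \<in> S"
  unfolding mem_conic_hull_lift by (metis Pair_inject order.refl zero_le_one scaleR_one)

lemma conic_hull_lift_eq_iff:
  "conic hull (S \<times> {1::real}) = conic hull (T \<times> {1}) \<longleftrightarrow> S = T"
  by (metis Pair_one_mem_conic_hull_lift subsetI subset_antisym)

lemma cone_conic_hull: "cone (conic hull S)"
  using conic_conic_hull[of S] unfolding cone_def conic_def by blast

lemma closed_conic_hull_lift:
  fixes S :: "'a::euclidean_space set"
  assumes "compact S"
  shows "closed (conic hull (S \<times> {1::real}))"
  by (rule closed_conic_hull) (use assms in \<open>auto simp: compact_Times zero_prod_def\<close>)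

lemma conic_hull_lift_subset_halfspace:
  assumes "S \<subseteq> {x. a \<bullet> x \<le> b}"
  shows "conic hull (S \<times> {1::real}) \<subseteq> {p. (a, -b) \<bullet> p \<le> 0}"
proof
  fix p assume "p \<in> conic hull (S \<times> {1::real})"
  then obtain c x where "0 \<le> c" "x \<in> S" "p = (c *\<^sub>R x, c)"
    by (auto simp: mem_conic_hull_lift)
  moreover have "(a, -b) \<bullet> (c *\<^sub>R x, c) = c * (a \<bullet> x - b)"
    by (simp add: inner_Pair algebra_simps)
  moreover have "a \<bullet> x - b \<le> 0"
    using assms \<open>x \<in> S\<close> by auto
  ultimately show "p \<in> {p. (a, -b) \<bullet> p \<le> 0}"
    by (simp add: mult_nonneg_nonpos)
qed

lemma conic_hull_lift_Int_hyperplane: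
  assumes "S \<inter> {x. a \<bullet> x = b} \<noteq> {}"
  shows "conic hull ((S \<inter> {x. a \<bullet> x = b}) \<times> {1::real})
           = conic hull (S \<times> {1}) \<inter> {p. (a, -b) \<bullet> p = 0}"
proof -
  obtain x0 where x0: "x0 \<in> S" "a \<bullet> x0 = b"
    using assms by blast
  have eq: "(a, -b) \<bullet> (c *\<^sub>R x, c) = c * (a \<bullet> x - b)" for c x
    by (simp add: inner_Pair algebra_simps)
  show ?thesis
  proof (intro equalityI subsetI)
    fix p assume "p \<in> conic hull ((S \<inter> {x. a \<bullet> x = b}) \<times> {1::real})"
    then show "p \<in> conic hull (S \<times> {1}) \<inter> {p. (a, -b) \<bullet> p = 0}"
      by (auto simp: mem_conic_hull_lift eq)
  next
    fix p assume "p \<in> conic hull (S \<times> {1::real}) \<inter> {p. (a, -b) \<bullet> p = 0}"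
    then obtain c x where p: "0 \<le> c" "x \<in> S" "p = (c *\<^sub>R x, c)" and "c * (a \<bullet> x - b) = 0"
      by (auto simp: mem_conic_hull_lift eq)
    then consider "c = 0" | "a \<bullet> x = b"
      by auto
    then show "p \<in> conic hull ((S \<inter> {x. a \<bullet> x = b}) \<times> {1})"
      by cases (use p x0 in \<open>force simp: mem_conic_hull_lift\<close>)+
  qed
qed

lemma is_face_conic_hull_lift:
  fixes C :: "'a::euclidean_space set"
  assumes "compact C" "convex C" "C \<subseteq> {x. a \<bullet> x \<le> b}" "C \<inter> {x. a \<bullet> x = b} \<noteq> {}"
  shows "is_face (conic hull ((C \<inter> {x. a \<bullet> x = b}) \<times> {1::real})) (conic hull (C \<times> {1}))"
  unfolding conic_hull_lift_Int_hyperplane[OF assms(4)]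
  using assms conic_hull_lift_subset_halfspace[OF assms(3)]
  by (intro is_face_Int_supporting_hyperplane_le closed_conic_hull_lift convex_conic_hull convex_Times)
    auto

text \<open>A feasible direction \<open>(v, s)\<close> of the lifted cone at \<open>(x, 1)\<close> is, after rescaling the
  point it reaches back to height one, the feasible direction \<open>v - s x\<close> of \<open>C\<close> at \<open>x\<close>.\<close>
lemma tangent_cone_conic_hull_lift:
  fixes C :: "'a::real_normed_vector set"
  assumes "x \<in> C"
  shows "(d, 0) \<in> tangent_cone (x, 1) (conic hull (C \<times> {1::real})) \<longleftrightarrow> d \<in> tangent_cone x C"
proof
  let ?K = "conic hull (C \<times> {1::real})"
  define L where "L q = fst q - snd q *\<^sub>R x" for q :: "'a \<times> real"
  have "L ` feasible_directions (x, 1) ?K \<subseteq> feasible_directions x C"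
  proof (rule image_subsetI)
    fix q assume "q \<in> feasible_directions (x, 1) ?K"
    then obtain e c y where e: "e > 0" and "0 \<le> c" "y \<in> C"
      and xy: "x + e *\<^sub>R fst q = c *\<^sub>R y" and c: "1 + e * snd q = c"
      by (auto simp: feasible_directions_def mem_conic_hull_lift prod_eq_iff)
    have eL: "e *\<^sub>R L q = (x + e *\<^sub>R fst q) - (1 + e * snd q) *\<^sub>R x"
      by (simp add: L_def algebra_simps)
    consider "c = 0" | "c > 0"
      using \<open>0 \<le> c\<close> by linarith
    then show "L q \<in> feasible_directions x C"
    proof cases
      case 1
      then have "L q = 0"
        using eL xy c e by simp
      then show ?thesis
        using assms by (auto simp: feasible_directions_def intro: exI[of _ 1])
    next
      case 2
      have "c *\<^sub>R (x + (e / c) *\<^sub>R L q) = c *\<^sub>R x + e *\<^sub>R L q"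
        using 2 by (simp add: scaleR_add_right)
      also have "\<dots> = c *\<^sub>R y"
        using eL xy c by (simp add: algebra_simps)
      finally have "x + (e / c) *\<^sub>R L q = y"
        using 2 by simp
      then show ?thesis
        using 2 e \<open>y \<in> C\<close> unfolding feasible_directions_def
        by (metis (mono_tags) CollectI divide_pos_pos)
    qed
  qed
  moreover have "continuous_on UNIV L"
    unfolding L_def by (intro continuous_intros)
  ultimately have "L ` tangent_cone (x, 1) ?K \<subseteq> tangent_cone x C"
    by (rule tangent_cone_image_subset[rotated])
  then show "d \<in> tangent_cone x C" if "(d, 0) \<in> tangent_cone (x, 1) ?K"
    using that by (force simp: L_def)
  have "(\<lambda>v. (v, 0)) ` feasible_directions x C \<subseteq> feasible_directions (x, 1) ?K"
  proof (rule image_subsetI)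
    fix v assume "v \<in> feasible_directions x C"
    then obtain e where "e > 0" "x + e *\<^sub>R v \<in> C"
      by (auto simp: feasible_directions_def)
    then have "(x, 1) + e *\<^sub>R (v, 0) \<in> ?K"
      by (simp add: Pair_one_mem_conic_hull_lift)
    with \<open>e > 0\<close> show "(v, 0) \<in> feasible_directions (x, 1) ?K"
      by (auto simp: feasible_directions_def)
  qed
  moreover have "continuous_on UNIV (\<lambda>v::'a. (v, 0::real))"
    by (intro continuous_intros)
  ultimately have "(\<lambda>v. (v, 0)) ` tangent_cone x C \<subseteq> tangent_cone (x, 1) ?K"
    by (rule tangent_cone_image_subset[rotated])
  then show "(d, 0) \<in> tangent_cone (x, 1) ?K" if "d \<in> tangent_cone x C"
    using that by blast
qed

lemma span_conic_hull_lift: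
  assumes "0 \<in> S" "d \<in> span S"
  shows "(d, 0) \<in> span (conic hull (S \<times> {1::real}))"
  using assms(2)
proof (induction rule: span_induct)
  case (step s)
  have "(s, 0) = (s, 1) - (0, 1::real)"
    by simp
  then show ?case
    using step assms(1) by (metis Pair_one_mem_conic_hull_lift span_base span_diff)
next
  case base
  let ?V = "span (conic hull (S \<times> {1::real}))"
  show ?case
  proof (rule subspaceI; unfold mem_Collect_eq)
    show "(0, 0) \<in> ?V"
      using span_zero by (metis zero_prod_def)
    show "(v + w, 0) \<in> ?V" if "(v, 0) \<in> ?V" "(w, 0) \<in> ?V" for v w
      using span_add[OF that] by simp
    show "(c *\<^sub>R v, 0) \<in> ?V" if "(v, 0) \<in> ?V" for c v
      using span_scale[OF that, of c] by simp
  qed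
qed

lemma not_tangentially_exposed_conic_hull_lift:
  fixes C :: "'a::euclidean_space set"
  assumes "compact C" "convex C" "C \<subseteq> {x. a \<bullet> x \<le> 0}"
    and F: "F = C \<inter> {x. a \<bullet> x = 0}" "0 \<in> F" "F \<noteq> C"
    and d: "d \<in> tangent_cone 0 C" "d \<in> span F" "d \<notin> tangent_cone 0 F"
  shows "\<not> tangentially_exposed (conic hull (C \<times> {1::real}))"
proof
  let ?K = "conic hull (C \<times> {1::real})" and ?KF = "conic hull (F \<times> {1::real})"
  assume exposed: "tangentially_exposed ?K"
  have "C \<inter> {x. a \<bullet> x = 0} \<noteq> {}"
    using F(1,2) by blast
  then have "is_face ?KF ?K"
    using is_face_conic_hull_lift[OF assms(1-3)] F(1) by simp
  moreover have "?KF \<noteq> ?K"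
    using F(3) by (simp add: conic_hull_lift_eq_iff)
  moreover have "(0, 1) \<in> ?KF"
    using F(2) by (simp add: Pair_one_mem_conic_hull_lift)
  ultimately have "tangent_cone (0, 1) ?K \<inter> span ?KF = tangent_cone (0, 1) ?KF"
    using exposed unfolding tangentially_exposed_def by simp
  moreover have "(d, 0) \<in> tangent_cone (0, 1) ?K"
    using tangent_cone_conic_hull_lift[of 0 C d] F(1,2) d(1) by simp
  moreover have "(d, 0) \<in> span ?KF"
    using span_conic_hull_lift[OF F(2) d(2)] .
  moreover have "(d, 0) \<notin> tangent_cone (0, 1) ?KF"
    using tangent_cone_conic_hull_lift[OF F(2), of d] d(3) by simp
  ultimately show False
    by blast
qed

lemma vector_3_eq_axis:
  "(vector [a, b, c] :: real^3) = a *\<^sub>R axis 1 1 + b *\<^sub>R axis 2 1 + c *\<^sub>R axis 3 1"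
  by (simp add: vec_eq_iff forall_3 axis_def)

lemma continuous_on_gamma:
  "continuous_on S gamma1" "continuous_on S gamma2" "continuous_on S gamma3" "continuous_on S gamma4"
  unfolding gamma1_def gamma2_def gamma3_def gamma4_def vector_3_eq_axis
  by (intro continuous_intros)+

definition exF_arcs :: "(real^3) set" where
  "exF_arcs = gamma3 ` {0..pi/4} \<union> gamma4 ` {0..pi/4}"

definition exC_arcs :: "(real^3) set" where
  "exC_arcs = gamma1 ` {0..pi/4} \<union> gamma2 ` {0..pi/4} \<union> exF_arcs"

lemma exC_eq_convex_hull_arcs: "exC = convex hull exC_arcs"
  unfolding exC_def exC_arcs_def exF_arcs_def by (simp add: Un_assoc)

lemma exF_eq_convex_hull_arcs: "exF = convex hull exF_arcs"
  unfolding exF_def exF_arcs_def ..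

lemma compact_exF_arcs: "compact exF_arcs"
  unfolding exF_arcs_def by (intro compact_Un compact_continuous_image continuous_on_gamma compact_Icc)

lemma compact_exC_arcs: "compact exC_arcs"
  unfolding exC_arcs_def
  by (intro compact_Un compact_continuous_image continuous_on_gamma compact_Icc compact_exF_arcs)

lemma sin_nonneg_quarter: "t \<in> {0..pi/4} \<Longrightarrow> 0 \<le> sin t"
  by (auto intro!: sin_ge_zero)

lemma exC_arcs_subset_halfspace: "exC_arcs \<subseteq> {x. axis 3 1 \<bullet> x \<le> 0}"
  unfolding exC_arcs_def exF_arcs_def
  by (auto simp: inner_axis' gamma1_def gamma2_def gamma3_def gamma4_def sin_nonneg_quarter)

lemma exF_arcs_subset:
  "exF_arcs \<subseteq> {x. axis 3 1 \<bullet> x = 0} \<inter> {x. - axis 2 1 \<bullet> x \<le> 0}"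
  unfolding exF_arcs_def
  by (auto simp: inner_axis' gamma3_def gamma4_def sin_nonneg_quarter)

lemma zero_in_exF_arcs: "0 \<in> exF_arcs"
proof -
  have "gamma3 0 = 0"
    by (simp add: gamma3_def vec_eq_iff forall_3)
  moreover have "(0::real) \<in> {0..pi/4}"
    by simp
  ultimately show ?thesis
    unfolding exF_arcs_def by (metis UnI1 image_eqI)
qed

lemma exC_arcs_Int_plane: "exC_arcs \<inter> {x. axis 3 1 \<bullet> x = 0} \<subseteq> exF_arcs"
proof
  fix x assume x: "x \<in> exC_arcs \<inter> {x. axis 3 1 \<bullet> x = 0}"
  then have x3: "x $ 3 = 0"
    by (simp add: inner_axis')
  have "x = 0" if arc: "x \<in> gamma1 ` {0..pi/4} \<union> gamma2 ` {0..pi/4}"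
  proof -
    obtain t where t: "t \<in> {0..pi/4}" and "x = gamma1 t \<or> x = gamma2 t"
      using arc by blast
    moreover have "gamma1 t $ 3 = cos t - 1" "gamma2 t $ 3 = - sin t"
      by (simp_all add: gamma1_def gamma2_def)
    ultimately have "sin t = 0" and x_eq: "x = gamma1 t \<or> x = gamma2 t"
      using x3 cos_one_sin_zero[of t] by auto
    moreover have "- pi < t" "t < pi"
      using t pi_gt_zero unfolding atLeastAtMost_iff by linarith+
    ultimately have "t = 0"
      using sin_eq_0_pi by blast
    with x_eq show "x = 0"
      by (auto simp: gamma1_def gamma2_def vec_eq_iff forall_3)
  qed
  moreover have "x \<in> gamma1 ` {0..pi/4} \<union> gamma2 ` {0..pi/4} \<union> exF_arcs"
    using x unfolding exC_arcs_def by (rule IntD1)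
  ultimately show "x \<in> exF_arcs"
    using zero_in_exF_arcs by (metis UnE)
qed

lemma exC_subset_halfspace: "exC \<subseteq> {x. axis 3 1 \<bullet> x \<le> 0}"
  unfolding exC_eq_convex_hull_arcs
  by (intro hull_minimal exC_arcs_subset_halfspace convex_halfspace_le)

lemma exF_subset_halfspace: "exF \<subseteq> {x. - axis 2 1 \<bullet> x \<le> 0}"
  unfolding exF_eq_convex_hull_arcs
  using exF_arcs_subset by (intro hull_minimal convex_halfspace_le) auto

lemma exF_eq_exC_Int_plane: "exF = exC \<inter> {x. axis 3 1 \<bullet> x = 0}"
proof (rule antisym)
  have "exF \<subseteq> exC"
    unfolding exF_eq_convex_hull_arcs exC_eq_convex_hull_arcs exC_arcs_def by (rule hull_mono) auto
  moreover have "exF \<subseteq> {x. axis 3 1 \<bullet> x = 0}"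
    unfolding exF_eq_convex_hull_arcs using exF_arcs_subset
    by (intro hull_minimal convex_hyperplane) auto
  ultimately show "exF \<subseteq> exC \<inter> {x. axis 3 1 \<bullet> x = 0}"
    by blast
  let ?T = "exC \<inter> {x. axis 3 1 \<bullet> x = 0}"
  have "?T face_of convex hull exC_arcs"
    using exC_subset_halfspace unfolding exC_eq_convex_hull_arcs
    by (intro face_of_Int_supporting_hyperplane_le) auto
  then have "?T = convex hull (exC_arcs \<inter> ?T)"
    by (rule face_of_convex_hull_eq_convex_hull_Int[OF compact_exC_arcs])
  also have "\<dots> \<subseteq> exF"
    unfolding exF_eq_convex_hull_arcs using exC_arcs_Int_plane by (intro hull_mono) auto
  finally show "?T \<subseteq> exF" .
qed

lemma zero_in_exF: "0 \<in> exF"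
  unfolding exF_eq_convex_hull_arcs using zero_in_exF_arcs by (rule hull_inc)

lemma exF_neq_exC: "exF \<noteq> exC"
proof
  have "gamma1 (pi/4) \<in> exC"
    unfolding exC_eq_convex_hull_arcs exC_arcs_def by (intro hull_inc) auto
  moreover have "sqrt (2::real) < 2"
    using real_sqrt_less_iff[of 2 4] by simp
  then have "axis 3 1 \<bullet> gamma1 (pi/4) \<noteq> 0"
    by (simp add: inner_axis' gamma1_def cos_45)
  moreover assume "exF = exC"
  ultimately show False
    using exF_eq_exC_Int_plane by blast
qed

text \<open>The directions \<open>gamma1 t / sin t\<close> are feasible for \<open>exC\<close> at \<open>0\<close>; rewriting
  \<open>(cos t - 1) / sin t\<close> as \<open>- sin t / (1 + cos t)\<close> makes them continuous at \<open>t = 0\<close>, where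
  they tend to \<open>(0, -1, 0)\<close>.\<close>
lemma in_tangent_cone_exC: "vector [0, -1, 0] \<in> tangent_cone 0 exC"
proof -
  define f where "f t = (vector [0, -1, - sin t / (1 + cos t)] :: real^3)" for t
  have "f t \<in> tangent_cone 0 exC" if t: "t \<in> {0<..<pi/4}" for t
  proof -
    have "0 < sin t" "0 < cos t"
      using t pi_gt_zero by (auto intro!: sin_gt_zero cos_gt_zero_pi)
    have "sin t * (- sin t / (1 + cos t)) = cos t - 1"
      using \<open>0 < cos t\<close> sin_squared_eq[of t] by (simp add: field_simps power2_eq_square)
    then have "sin t *\<^sub>R f t = gamma1 t"
      by (simp add: f_def gamma1_def vec_eq_iff forall_3)
    moreover have "gamma1 t \<in> exC"
      unfolding exC_eq_convex_hull_arcs exC_arcs_def using t by (intro hull_inc) auto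
    ultimately have "f t \<in> feasible_directions 0 exC"
      using \<open>0 < sin t\<close> by (auto simp: feasible_directions_def)
    then show ?thesis
      using feasible_directions_subset_tangent_cone by blast
  qed
  moreover have "(f \<longlongrightarrow> f 0) (at_right 0)"
    unfolding f_def vector_3_eq_axis by (intro tendsto_intros) auto
  moreover have "f 0 = vector [0, -1, 0]"
    by (simp add: f_def)
  ultimately show ?thesis
    using eventually_at_right_real[of 0 "pi/4"] pi_gt_zero
    by (intro Lim_in_closed_set[of _ f "at_right 0"]) (auto simp: tangent_cone_def elim!: eventually_mono)
qed

lemma in_span_exF: "vector [0, -1, 0] \<in> span exF"
proof -
  txt \<open>With \<open>s = cos (pi/4) = sin (pi/4)\<close> we have \<open>gamma3 (pi/4) = (-s, 1 - s, 0)\<close> and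
    \<open>gamma4 (pi/4) = (s - 1, s, 0)\<close>; \<open>a\<close> and \<open>b\<close> solve the resulting \<open>2 \<times> 2\<close> system.\<close>
  define s :: real where "s = sqrt 2 / 2"
  define a b where "a = (s - 1) / (1 - 2 * s)" and "b = s / (1 - 2 * s)"
  have D: "1 - 2 * s \<noteq> 0"
    by (simp add: s_def)
  have e1: "a * (- s) + b * (s - 1) = 0"
    unfolding a_def b_def using D by (simp add: field_simps)
  have "a * (1 - s) + b * s = ((s - 1) * (1 - s) + s * s) / (1 - 2 * s)"
    unfolding a_def b_def by (simp add: add_divide_distrib)
  also have "(s - 1) * (1 - s) + s * s = - (1 - 2 * s)"
    by (simp add: algebra_simps)
  finally have e2: "a * (1 - s) + b * s = -1"
    using D by (simp add: divide_eq_minus_1_iff)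
  have "gamma3 (pi/4) \<in> exF" "gamma4 (pi/4) \<in> exF"
    unfolding exF_eq_convex_hull_arcs exF_arcs_def by (intro hull_inc; simp)+
  then have "a *\<^sub>R gamma3 (pi/4) + b *\<^sub>R gamma4 (pi/4) \<in> span exF"
    by (intro span_add span_scale span_base)
  moreover have "a *\<^sub>R gamma3 (pi/4) + b *\<^sub>R gamma4 (pi/4) = vector [0, -1, 0]"
    using e1 e2 unfolding gamma3_def gamma4_def sin_45 cos_45 s_def[symmetric]
    by (simp add: vec_eq_iff forall_3)
  ultimately show ?thesis
    by simp
qed

lemma notin_tangent_cone_exF: "vector [0, -1, 0] \<notin> tangent_cone 0 exF"
proof -
  have "tangent_cone 0 exF \<subseteq> {d. - axis 2 1 \<bullet> d \<le> 0}"
    using exF_subset_halfspace by (intro tangent_cone_subset_halfspace) auto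
  then show ?thesis
    by (auto simp: inner_axis')
qed

theorem mainTheorem6:
  fixes g :: "real^3" and K :: "((real^3) \<times> real) set"
  defines "g \<equiv> vector [0, -1, 0]"
      and "K \<equiv> cone_gen (exC \<times> {1})"
  shows "is_face exF exC \<and> 0 \<in> exF
    \<and> tangent_cone 0 exC \<inter> span exF \<noteq> tangent_cone 0 exF
    \<and> g \<in> tangent_cone 0 exC \<inter> span exF \<and> g \<notin> tangent_cone 0 exF
    \<and> closed K \<and> convex K \<and> cone K \<and> \<not> tangentially_exposed K"
proof -
  have C: "compact exC" "convex exC"
    unfolding exC_eq_convex_hull_arcs by (simp_all add: compact_convex_hull compact_exC_arcs)
  have "is_face exF exC"
    unfolding exF_eq_exC_Int_plane
    using C exC_subset_halfspace by (intro is_face_Int_supporting_hyperplane_le compact_imp_closed)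
  moreover have g: "g \<in> tangent_cone 0 exC \<inter> span exF" "g \<notin> tangent_cone 0 exF"
    unfolding g_def using in_tangent_cone_exC in_span_exF notin_tangent_cone_exF by auto
  moreover have K: "K = conic hull (exC \<times> {1})"
    unfolding K_def using C(2) by (simp add: cone_gen_eq_conic_hull convex_Times)
  moreover have "\<not> tangentially_exposed K"
    unfolding K using C exC_subset_halfspace exF_eq_exC_Int_plane zero_in_exF exF_neq_exC g
    by (intro not_tangentially_exposed_conic_hull_lift) auto
  ultimately show ?thesis
    using C zero_in_exF closed_conic_hull_lift[OF C(1)]
    by (auto simp: convex_conic_hull convex_Times cone_conic_hull)
qed

end
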